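(* Let $R$ be a semi-graded ring, let $f:N\to M$ be a homogeneous homomorphism of semi-graded $R$-modules, and let $X\subseteq N$. Then $f(\langle X\rangle^{\mathsf{SG}})=\langle f(X)\rangle^{\mathsf{SG}}$.
   Context: Rings are associative with $1$; modules are left modules. A ring $R$ is semi-graded (SG) if there are additive subgroups $R_n$ ($n\in\mathbb{Z}$) with $R=\bigoplus_n R_n$, $R_mR_n\subseteq\bigoplus_{k\le m+n}R_k$, and $1\in R_0$. An $R$-module $M$ is SG if $M=\bigoplus_nM_n$ (additive subgroups) with $R_mM_n\subseteq\bigoplus_{k\le m+n}M_k$ for $m\ge0$, $n\in\mathbb{Z}$. A homomorphism $f:N\to M$ of SG modules is homogeneous if $f(N_n)\subseteq M_n$ for all $n$. A submodule $N'$ of an SG module $N$ is an SG submodule if $N'=\bigoplus_n(N'\cap N_n)$. For a subset $X$ of an SG module, $\langle X\rangle^{\mathsf{SG}}$ is the intersection of all SG submodules containing $X$. *)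

theory Defs
  imports "HOL-Algebra.Algebra"
begin

text \<open>Left modules over a (not necessarily commutative) ring with 1.
  HOL-Algebra's locale module requires a commutative ring, so we use the
  same axioms over an arbitrary ring.\<close>

locale lmodule = R?: ring R + M?: abelian_group M
  for R :: "('a, 'c) ring_scheme" (structure) and M :: "('a, 'b, 'd) module_scheme" (structure) +
  assumes smult_closed [simp, intro]:
      "\<lbrakk>a \<in> carrier R; x \<in> carrier M\<rbrakk> \<Longrightarrow> a \<odot>\<^bsub>M\<^esub> x \<in> carrier M"
    and smult_l_distr:
      "\<lbrakk>a \<in> carrier R; b \<in> carrier R; x \<in> carrier M\<rbrakk> \<Longrightarrow>
      (a \<oplus> b) \<odot>\<^bsub>M\<^esub> x = a \<odot>\<^bsub>M\<^esub> x \<oplus>\<^bsub>M\<^esub> b \<odot>\<^bsub>M\<^esub> x"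
    and smult_r_distr:
      "\<lbrakk>a \<in> carrier R; x \<in> carrier M; y \<in> carrier M\<rbrakk> \<Longrightarrow>
      a \<odot>\<^bsub>M\<^esub> (x \<oplus>\<^bsub>M\<^esub> y) = a \<odot>\<^bsub>M\<^esub> x \<oplus>\<^bsub>M\<^esub> a \<odot>\<^bsub>M\<^esub> y"
    and smult_assoc1:
      "\<lbrakk>a \<in> carrier R; b \<in> carrier R; x \<in> carrier M\<rbrakk> \<Longrightarrow>
      (a \<otimes> b) \<odot>\<^bsub>M\<^esub> x = a \<odot>\<^bsub>M\<^esub> (b \<odot>\<^bsub>M\<^esub> x)"
    and smult_one [simp]:
      "x \<in> carrier M \<Longrightarrow> \<one> \<odot>\<^bsub>M\<^esub> x = x"

definition lmodule_hom ::
  "('a, 'c) ring_scheme \<Rightarrow> ('a, 'b, 'd) module_scheme \<Rightarrow> ('a, 'e, 'f) module_scheme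
     \<Rightarrow> ('b \<Rightarrow> 'e) set" where
  "lmodule_hom R N M = {f. f \<in> carrier N \<rightarrow> carrier M \<and>
     (\<forall>x\<in>carrier N. \<forall>y\<in>carrier N. f (x \<oplus>\<^bsub>N\<^esub> y) = f x \<oplus>\<^bsub>M\<^esub> f y) \<and>
     (\<forall>a\<in>carrier R. \<forall>x\<in>carrier N. f (a \<odot>\<^bsub>N\<^esub> x) = a \<odot>\<^bsub>M\<^esub> f x)}"

definition is_dsum :: "('b, 'm) ring_scheme \<Rightarrow> (int \<Rightarrow> 'b set) \<Rightarrow> bool" where
  "is_dsum G D \<longleftrightarrow>
     (\<forall>n. subgroup (D n) (add_monoid G)) \<and>
     (\<forall>x\<in>carrier G. \<exists>S c. finite S \<and> (\<forall>n\<in>S. c n \<in> D n) \<and> x = finsum G c S) \<and>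
     (\<forall>S c. finite S \<and> (\<forall>n\<in>S. c n \<in> D n) \<and> finsum G c S = \<zero>\<^bsub>G\<^esub>
        \<longrightarrow> (\<forall>n\<in>S. c n = \<zero>\<^bsub>G\<^esub>))"

definition dsum_upto :: "('b, 'm) ring_scheme \<Rightarrow> (int \<Rightarrow> 'b set) \<Rightarrow> int \<Rightarrow> 'b set" where
  "dsum_upto G D n = {finsum G c S | S c. finite S \<and> S \<subseteq> {..n} \<and> (\<forall>k\<in>S. c k \<in> D k)}"

definition semi_graded_ring :: "('a, 'c) ring_scheme \<Rightarrow> (int \<Rightarrow> 'a set) \<Rightarrow> bool" where
  "semi_graded_ring R DR \<longleftrightarrow> ring R \<and> is_dsum R DR \<and>
     (\<forall>m n. \<forall>a\<in>DR m. \<forall>b\<in>DR n. a \<otimes>\<^bsub>R\<^esub> b \<in> dsum_upto R DR (m + n)) \<and>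
     \<one>\<^bsub>R\<^esub> \<in> DR 0"

definition semi_graded_module ::
  "('a, 'c) ring_scheme \<Rightarrow> (int \<Rightarrow> 'a set) \<Rightarrow> ('a, 'b, 'd) module_scheme \<Rightarrow> (int \<Rightarrow> 'b set) \<Rightarrow> bool" where
  "semi_graded_module R DR M DM \<longleftrightarrow> lmodule R M \<and> is_dsum M DM \<and>
     (\<forall>m n. m \<ge> 0 \<longrightarrow> (\<forall>r\<in>DR m. \<forall>x\<in>DM n. r \<odot>\<^bsub>M\<^esub> x \<in> dsum_upto M DM (m + n)))"

definition homogeneous :: "(int \<Rightarrow> 'b set) \<Rightarrow> (int \<Rightarrow> 'e set) \<Rightarrow> ('b \<Rightarrow> 'e) \<Rightarrow> bool" where
  "homogeneous DN DM f \<longleftrightarrow> (\<forall>n. f ` DN n \<subseteq> DM n)"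

definition sg_submodule ::
  "('a, 'c) ring_scheme \<Rightarrow> ('a, 'b, 'd) module_scheme \<Rightarrow> (int \<Rightarrow> 'b set) \<Rightarrow> 'b set \<Rightarrow> bool" where
  "sg_submodule R N DN N' \<longleftrightarrow> submodule N' R N \<and>
     (\<forall>x\<in>N'. \<exists>S c. finite S \<and> (\<forall>n\<in>S. c n \<in> N' \<inter> DN n) \<and> x = finsum N c S)"

definition sg_span ::
  "('a, 'c) ring_scheme \<Rightarrow> ('a, 'b, 'd) module_scheme \<Rightarrow> (int \<Rightarrow> 'b set) \<Rightarrow> 'b set \<Rightarrow> 'b set" where
  "sg_span R N DN A = \<Inter> {N'. sg_submodule R N DN N' \<and> A \<subseteq> N'}"

end

theory Submission
  imports Defs
begin

text \<open>By uniqueness of homogeneous decompositions, an SG submodule is the same as a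
  submodule that contains every homogeneous component of each of its elements. A homogeneous
  homomorphism carries homogeneous decompositions to homogeneous decompositions, so images and
  preimages of SG submodules are SG submodules. Hence the image of the SG span of \<open>X\<close> is an
  SG submodule containing \<open>f(X)\<close>, and the preimage of the SG span of \<open>f(X)\<close> is an SG submodule
  containing \<open>X\<close>; minimality of SG spans gives both inclusions.\<close>

lemma is_dsum_subset_carrier: "is_dsum G D \<Longrightarrow> D n \<subseteq> carrier G"
  unfolding is_dsum_def using subgroup.subset by force

lemma (in abelian_group) finsum_negf:
  assumes "finite S" "c \<in> S \<rightarrow> carrier G"
  shows "(\<Oplus>i\<in>S. \<ominus> c i) = \<ominus> (\<Oplus>i\<in>S. c i)"
  using assms
proof (induction S rule: finite_induct)
  case empty
  show ?case by (simp add: a_inv_def)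
qed (simp add: finsum_insert minus_add Pi_iff)

lemma (in abelian_group) is_dsum_components_eq:
  assumes dsum: "is_dsum G D" and S: "finite S"
    and c: "\<forall>i\<in>S. c i \<in> D i" and d: "\<forall>i\<in>S. d i \<in> D i"
    and eq: "(\<Oplus>i\<in>S. c i) = (\<Oplus>i\<in>S. d i)" and n: "n \<in> S"
  shows "c n = d n"
proof -
  have sub: "\<And>i. subgroup (D i) (add_monoid G)"
    and indep: "\<And>e. \<forall>i\<in>S. e i \<in> D i \<Longrightarrow> (\<Oplus>i\<in>S. e i) = \<zero> \<Longrightarrow> \<forall>i\<in>S. e i = \<zero>"
    using dsum S unfolding is_dsum_def by blast+
  have cC: "c \<in> S \<rightarrow> carrier G" and dC: "d \<in> S \<rightarrow> carrier G"
    using c d is_dsum_subset_carrier[OF dsum] by blast+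
  have "(\<Oplus>i\<in>S. c i \<oplus> \<ominus> d i) = (\<Oplus>i\<in>S. c i) \<oplus> \<ominus> (\<Oplus>i\<in>S. d i)"
    using S cC dC by (simp add: finsum_addf finsum_negf Pi_iff)
  also have "\<dots> = \<zero>"
    using eq dC by (simp add: r_neg)
  finally have "\<forall>i\<in>S. c i \<oplus> \<ominus> d i = \<zero>"
    using c d subgroup.m_closed[OF sub] subgroup.m_inv_closed[OF sub]
    by (intro indep) (auto simp: a_inv_def)
  with n cC dC show ?thesis
    by (metis Pi_iff a_inv_closed minus_equality minus_minus)
qed

lemma (in abelian_group) is_dsum_components_unique:
  assumes dsum: "is_dsum G D" and S: "finite S" and T: "finite T"
    and c: "\<forall>i\<in>S. c i \<in> D i" and d: "\<forall>i\<in>T. d i \<in> D i"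
    and eq: "(\<Oplus>i\<in>S. c i) = (\<Oplus>i\<in>T. d i)" and n: "n \<in> S"
  shows "c n = (if n \<in> T then d n else \<zero>)"
proof -
  define c' where "c' i = (if i \<in> S then c i else \<zero>)" for i
  define d' where "d' i = (if i \<in> T then d i else \<zero>)" for i
  have zero: "\<zero> \<in> D i" for i
    using dsum subgroup.one_closed unfolding is_dsum_def by force
  then have c': "\<forall>i\<in>S \<union> T. c' i \<in> D i" and d': "\<forall>i\<in>S \<union> T. d' i \<in> D i"
    using c d by (simp_all add: c'_def d'_def)
  have "(\<Oplus>i\<in>S \<union> T. c' i) = (\<Oplus>i\<in>S. c i)"
    using S T c' is_dsum_subset_carrier[OF dsum] by (intro add.finprod_mono_neutral_cong_left [symmetric]) (auto simp: c'_def)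
  also have "\<dots> = (\<Oplus>i\<in>T. d i)"
    by (rule eq)
  also have "\<dots> = (\<Oplus>i\<in>S \<union> T. d' i)"
    using S T d' is_dsum_subset_carrier[OF dsum] by (intro add.finprod_mono_neutral_cong_left) (auto simp: d'_def)
  finally have "c' n = d' n"
    using is_dsum_components_eq[OF dsum _ c' d'] S T n by blast
  with n show ?thesis
    by (simp add: c'_def d'_def)
qed

lemma lmodule_hom_abelian_group_hom:
  assumes "abelian_group N" "abelian_group M" "f \<in> lmodule_hom R N M"
  shows "abelian_group_hom N M f"
  using assms abelian_group.a_group[OF assms(1)] abelian_group.a_group[OF assms(2)]
  unfolding lmodule_hom_def
  by (intro abelian_group_homI group_hom.intro group_hom_axioms.intro homI) auto

lemma lmodule_hom_smult:
  "f \<in> lmodule_hom R N M \<Longrightarrow> a \<in> carrier R \<Longrightarrow> x \<in> carrier N \<Longrightarrow>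
    f (a \<odot>\<^bsub>N\<^esub> x) = a \<odot>\<^bsub>M\<^esub> f x"
  by (simp add: lmodule_hom_def)

lemma (in abelian_group_hom) hom_finsum:
  assumes "finite S" "c \<in> S \<rightarrow> carrier G"
  shows "h (\<Oplus>i\<in>S. c i) = (\<Oplus>\<^bsub>H\<^esub>i\<in>S. h (c i))"
  using assms by (induction S rule: finite_induct) (simp_all add: G.finsum_insert H.finsum_insert Pi_iff)

sublocale submodule \<subseteq> additive_subgroup H M
  by (rule additive_subgroupI) (rule subgroup_axioms)

lemma (in lmodule) submoduleI:
  assumes "H \<subseteq> carrier M" "\<zero>\<^bsub>M\<^esub> \<in> H"
    and "\<And>x. x \<in> H \<Longrightarrow> \<ominus>\<^bsub>M\<^esub> x \<in> H"
    and "\<And>x y. x \<in> H \<Longrightarrow> y \<in> H \<Longrightarrow> x \<oplus>\<^bsub>M\<^esub> y \<in> H"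
    and "\<And>a x. a \<in> carrier R \<Longrightarrow> x \<in> H \<Longrightarrow> a \<odot>\<^bsub>M\<^esub> x \<in> H"
  shows "submodule H R M"
  using assms by (intro submodule.intro submodule_axioms.intro add.subgroupI) auto

lemma (in lmodule) carrier_is_submodule: "submodule (carrier M) R M"
  by (rule submoduleI) auto

lemma (in lmodule) submodule_Inter:
  assumes "\<And>H. H \<in> Hs \<Longrightarrow> submodule H R M" "Hs \<noteq> {}"
  shows "submodule (\<Inter>Hs) R M"
  using assms
  by (intro submodule.intro submodule_axioms.intro add.subgroups_Inter)
    (auto dest: submodule.axioms(1) submodule.smult_closed)

lemma submodule_vimage:
  assumes N: "lmodule R N" and M: "lmodule R M" and f: "f \<in> lmodule_hom R N M"
    and P: "submodule P R M"
  shows "submodule {x \<in> carrier N. f x \<in> P} R N"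
proof -
  interpret N: lmodule R N by (rule N)
  interpret M: lmodule R M by (rule M)
  interpret f: abelian_group_hom N M f
    using lmodule_hom_abelian_group_hom[OF N.abelian_group_axioms M.abelian_group_axioms f] .
  interpret P: submodule P R M by (rule P)
  show ?thesis
    by (rule N.submoduleI) (auto simp: lmodule_hom_smult[OF f])
qed

lemma submodule_image:
  assumes N: "lmodule R N" and M: "lmodule R M" and f: "f \<in> lmodule_hom R N M"
    and P: "submodule P R N"
  shows "submodule (f ` P) R M"
proof -
  interpret N: lmodule R N by (rule N)
  interpret M: lmodule R M by (rule M)
  interpret f: abelian_group_hom N M f
    using lmodule_hom_abelian_group_hom[OF N.abelian_group_axioms M.abelian_group_axioms f] .
  interpret P: submodule P R N by (rule P)
  have PC: "x \<in> P \<Longrightarrow> x \<in> carrier N" for x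
    using P.a_subset by blast
  show ?thesis
  proof (rule M.submoduleI)
    show "\<zero>\<^bsub>M\<^esub> \<in> f ` P"
      using f.hom_zero by (metis P.zero_closed image_eqI)
    show "\<ominus>\<^bsub>M\<^esub> y \<in> f ` P" if "y \<in> f ` P" for y
      using that PC by (auto simp flip: f.hom_a_inv)
    show "y \<oplus>\<^bsub>M\<^esub> z \<in> f ` P" if "y \<in> f ` P" "z \<in> f ` P" for y z
      using that PC by (auto simp flip: f.hom_add)
    show "a \<odot>\<^bsub>M\<^esub> y \<in> f ` P" if "a \<in> carrier R" "y \<in> f ` P" for a y
      using that PC by (auto simp flip: lmodule_hom_smult[OF f])
  qed (use PC in auto)
qed

lemma sg_submodule_homogeneous_component:
  assumes N: "abelian_group N" and dsum: "is_dsum N DN" and P: "sg_submodule R N DN P"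
    and S: "finite S" "\<forall>i\<in>S. c i \<in> DN i" and x: "finsum N c S \<in> P" and n: "n \<in> S"
  shows "c n \<in> P"
proof -
  interpret N: abelian_group N by (rule N)
  interpret P: submodule P R N
    using P unfolding sg_submodule_def by blast
  obtain T d where T: "finite T" "\<forall>i\<in>T. d i \<in> P \<inter> DN i" "finsum N c S = finsum N d T"
    using P x unfolding sg_submodule_def by blast
  then have "c n = (if n \<in> T then d n else \<zero>\<^bsub>N\<^esub>)"
    using N.is_dsum_components_unique[OF dsum S(1) T(1) S(2)] n by blast
  with T(2) show ?thesis
    by simp
qed

lemma sg_submoduleI:
  assumes dsum: "is_dsum N DN" and sub: "submodule P R N"
    and closed: "\<And>S c n. finite S \<Longrightarrow> \<forall>i\<in>S. c i \<in> DN i \<Longrightarrow> finsum N c S \<in> P \<Longrightarrow> n \<in> S \<Longrightarrow> c n \<in> P"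
  shows "sg_submodule R N DN P"
proof -
  interpret P: submodule P R N by (rule sub)
  have "\<exists>S c. finite S \<and> (\<forall>n\<in>S. c n \<in> P \<inter> DN n) \<and> x = finsum N c S" if x: "x \<in> P" for x
  proof -
    have "x \<in> carrier N"
      using x P.a_subset by blast
    then obtain S c where S: "finite S" "\<forall>n\<in>S. c n \<in> DN n" "x = finsum N c S"
      using dsum unfolding is_dsum_def by blast
    with closed[OF S(1,2)] x show ?thesis
      by blast
  qed
  with sub show ?thesis
    unfolding sg_submodule_def by blast
qed

lemma sg_submodule_carrier:
  assumes N: "lmodule R N" and dsum: "is_dsum N DN"
  shows "sg_submodule R N DN (carrier N)"
  by (rule sg_submoduleI[OF dsum lmodule.carrier_is_submodule[OF N]])
    (use is_dsum_subset_carrier[OF dsum] in blast)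

lemma sg_submodule_Inter:
  assumes N: "lmodule R N" and dsum: "is_dsum N DN"
    and Ps: "\<And>P. P \<in> Ps \<Longrightarrow> sg_submodule R N DN P" "Ps \<noteq> {}"
  shows "sg_submodule R N DN (\<Inter>Ps)"
proof (rule sg_submoduleI[OF dsum])
  show "submodule (\<Inter>Ps) R N"
    using Ps by (intro lmodule.submodule_Inter[OF N]) (auto simp: sg_submodule_def)
  have NG: "abelian_group N"
    using N by (simp add: lmodule_def)
  show "c n \<in> \<Inter>Ps"
    if "finite S" "\<forall>i\<in>S. c i \<in> DN i" "finsum N c S \<in> \<Inter>Ps" "n \<in> S" for S c n
    using that sg_submodule_homogeneous_component[OF NG dsum Ps(1)] by blast
qed

lemma sg_submodule_vimage:
  assumes N: "lmodule R N" and M: "lmodule R M" and dN: "is_dsum N DN" and dM: "is_dsum M DM"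
    and f: "f \<in> lmodule_hom R N M" and hom: "homogeneous DN DM f"
    and P: "sg_submodule R M DM P"
  shows "sg_submodule R N DN {x \<in> carrier N. f x \<in> P}"
proof (rule sg_submoduleI[OF dN])
  show "submodule {x \<in> carrier N. f x \<in> P} R N"
    using P by (intro submodule_vimage[OF N M f]) (simp add: sg_submodule_def)
  have NG: "abelian_group N" and MG: "abelian_group M"
    using N M by (simp_all add: lmodule_def)
  interpret f: abelian_group_hom N M f
    by (rule lmodule_hom_abelian_group_hom[OF NG MG f])
  fix S c n
  assume S: "finite S" "\<forall>i\<in>S. c i \<in> DN i" and x: "finsum N c S \<in> {x \<in> carrier N. f x \<in> P}"
    and n: "n \<in> S"
  have cC: "c \<in> S \<rightarrow> carrier N"
    using S(2) is_dsum_subset_carrier[OF dN] by blast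
  have "(\<Oplus>\<^bsub>M\<^esub>i\<in>S. f (c i)) \<in> P"
    using x f.hom_finsum[OF S(1) cC] by simp
  moreover have "\<forall>i\<in>S. f (c i) \<in> DM i"
    using S(2) hom unfolding homogeneous_def by blast
  ultimately have "f (c n) \<in> P"
    using sg_submodule_homogeneous_component[OF MG dM P S(1), of "\<lambda>i. f (c i)"] n by blast
  with cC n show "c n \<in> {x \<in> carrier N. f x \<in> P}"
    by blast
qed

lemma sg_submodule_image:
  assumes N: "lmodule R N" and M: "lmodule R M"
    and f: "f \<in> lmodule_hom R N M" and hom: "homogeneous DN DM f"
    and P: "sg_submodule R N DN P"
  shows "sg_submodule R M DM (f ` P)"
proof -
  have NG: "abelian_group N" and MG: "abelian_group M"
    using N M by (simp_all add: lmodule_def)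
  interpret f: abelian_group_hom N M f
    by (rule lmodule_hom_abelian_group_hom[OF NG MG f])
  have sub: "submodule P R N"
    using P by (simp add: sg_submodule_def)
  interpret P: submodule P R N by (rule sub)
  have "\<exists>S d. finite S \<and> (\<forall>n\<in>S. d n \<in> f ` P \<inter> DM n) \<and> f x = finsum M d S"
    if x: "x \<in> P" for x
  proof -
    obtain S c where S: "finite S" "\<forall>n\<in>S. c n \<in> P \<inter> DN n" "x = finsum N c S"
      using P x unfolding sg_submodule_def by blast
    have "c \<in> S \<rightarrow> carrier N"
      using S(2) P.a_subset by blast
    then have "f x = (\<Oplus>\<^bsub>M\<^esub>i\<in>S. f (c i))"
      using f.hom_finsum[OF S(1)] S(3) by simp
    moreover have "\<forall>n\<in>S. f (c n) \<in> f ` P \<inter> DM n"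
      using S(2) hom unfolding homogeneous_def by blast
    ultimately show ?thesis
      using S(1) by (intro exI[of _ S] exI[of _ "\<lambda>n. f (c n)"]) simp
  qed
  then have "\<forall>y\<in>f ` P. \<exists>S d. finite S \<and> (\<forall>n\<in>S. d n \<in> f ` P \<inter> DM n) \<and> y = finsum M d S"
    by blast
  with submodule_image[OF N M f sub] show ?thesis
    by (simp add: sg_submodule_def)
qed

lemma sg_span_least: "sg_submodule R N DN P \<Longrightarrow> Y \<subseteq> P \<Longrightarrow> sg_span R N DN Y \<subseteq> P"
  unfolding sg_span_def by blast

lemma sg_span_superset: "Y \<subseteq> sg_span R N DN Y"
  unfolding sg_span_def by blast

lemma sg_submodule_sg_span:
  assumes "lmodule R N" "is_dsum N DN" "Y \<subseteq> carrier N"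
  shows "sg_submodule R N DN (sg_span R N DN Y)"
  unfolding sg_span_def
  using assms sg_submodule_carrier[OF assms(1,2)] by (intro sg_submodule_Inter) auto

theorem mainTheorem2:
  fixes R :: "('a, 'c) ring_scheme" and DR :: "int \<Rightarrow> 'a set"
    and N :: "('a, 'b, 'd) module_scheme" and DN :: "int \<Rightarrow> 'b set"
    and M :: "('a, 'e, 'g) module_scheme" and DM :: "int \<Rightarrow> 'e set"
    and f :: "'b \<Rightarrow> 'e" and Y :: "'b set"
  assumes "semi_graded_ring R DR"
    and "semi_graded_module R DR N DN"
    and "semi_graded_module R DR M DM"
    and "f \<in> lmodule_hom R N M"
    and "homogeneous DN DM f"
    and "Y \<subseteq> carrier N"
  shows "f ` sg_span R N DN Y = sg_span R M DM (f ` Y)"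
proof
  have N: "lmodule R N" "is_dsum N DN" and M: "lmodule R M" "is_dsum M DM"
    using assms(2,3) by (simp_all add: semi_graded_module_def)
  have "f ` Y \<subseteq> carrier M"
    using assms(4,6) by (auto simp: lmodule_hom_def)
  then have "sg_submodule R M DM (sg_span R M DM (f ` Y))"
    by (rule sg_submodule_sg_span[OF M])
  then have "sg_submodule R N DN {x \<in> carrier N. f x \<in> sg_span R M DM (f ` Y)}"
    by (rule sg_submodule_vimage[OF N(1) M(1) N(2) M(2) assms(4,5)])
  then have "sg_span R N DN Y \<subseteq> {x \<in> carrier N. f x \<in> sg_span R M DM (f ` Y)}"
    by (rule sg_span_least) (use assms(6) sg_span_superset[of "f ` Y" R M DM] in blast)
  then show "f ` sg_span R N DN Y \<subseteq> sg_span R M DM (f ` Y)"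
    by blast
  have "sg_submodule R N DN (sg_span R N DN Y)"
    by (rule sg_submodule_sg_span[OF N assms(6)])
  then have "sg_submodule R M DM (f ` sg_span R N DN Y)"
    by (rule sg_submodule_image[OF N(1) M(1) assms(4,5)])
  then show "sg_span R M DM (f ` Y) \<subseteq> f ` sg_span R N DN Y"
    by (rule sg_span_least) (intro image_mono sg_span_superset)
qed

end
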